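(* Let $F$ be strictly convex and twice differentiable on an open convex domain $\mathcal{X}\subseteq\mathbb{R}^d$, with Bregman divergence $D_F$, and let $\mu\ge 1$. (i) If $D_F$ is $\mu$-similar then it is $2\mu$-admissible. (ii) If $D_F$ is $\mu$-admissible then it is directionally $\mu$-admissible. (iii) $D_F$ is $\mu$-asymmetric if and only if it is directionally $(1+\mu)$-admissible.
   Context: $D_F(q,p)=F(q)-F(p)-\langle\nabla F(p),q-p\rangle$. For a site $p\in\mathcal{X}$, let $f_p(x)=D_F(x,p)$ with derivatives taken in $x$. $D_F$ is $\tau$-admissible if for all $p,x\in\mathcal{X}$: $\|\nabla f_p(x)\|\,\|x-p\|\le\tau f_p(x)$ and $\|\nabla^2 f_p(x)\|\,\|x-p\|^2\le\tau^2 f_p(x)$ (Euclidean/spectral norms). $D_F$ is directionally $\tau$-admissible if for all $p,x\in\mathcal{X}$: $\langle\nabla f_p(x),x-p\rangle\le\tau f_p(x)$. $D_F$ is $\mu$-asymmetric if $D_F(q,p)\le\mu D_F(p,q)$ for all $p,q\in\mathcal{X}$. $D_F$ is $\mu$-similar if $\|q-p\|^2\le D_F(q,p)\le\mu\|q-p\|^2$ for all $p,q\in\mathcal{X}$. *)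

theory Defs
  imports "HOL-Analysis.Analysis"
begin

definition strictly_convex_on :: "'a::real_vector set \<Rightarrow> ('a \<Rightarrow> real) \<Rightarrow> bool" where
  "strictly_convex_on X F \<longleftrightarrow> convex X \<and>
     (\<forall>x\<in>X. \<forall>y\<in>X. x \<noteq> y \<longrightarrow> (\<forall>t::real. 0 < t \<and> t < 1 \<longrightarrow>
        F ((1 - t) *\<^sub>R x + t *\<^sub>R y) < (1 - t) * F x + t * F y))"

definition grad :: "('a::euclidean_space \<Rightarrow> real) \<Rightarrow> 'a \<Rightarrow> 'a" where
  "grad f x = (\<Sum>b\<in>Basis. frechet_derivative f (at x) b *\<^sub>R b)"

definition hess :: "('a::euclidean_space \<Rightarrow> real) \<Rightarrow> 'a \<Rightarrow> 'a \<Rightarrow> 'a" where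
  "hess f x = frechet_derivative (grad f) (at x)"

definition twice_differentiable_on :: "('a::euclidean_space \<Rightarrow> real) \<Rightarrow> 'a set \<Rightarrow> bool" where
  "twice_differentiable_on F X \<longleftrightarrow>
     (\<forall>x\<in>X. F differentiable (at x) \<and> grad F differentiable (at x))"

definition bregman :: "('a::euclidean_space \<Rightarrow> real) \<Rightarrow> 'a \<Rightarrow> 'a \<Rightarrow> real" where
  "bregman F q p = F q - F p - inner (grad F p) (q - p)"

definition fsite :: "('a::euclidean_space \<Rightarrow> real) \<Rightarrow> 'a \<Rightarrow> 'a \<Rightarrow> real" where
  "fsite F p = (\<lambda>x. bregman F x p)"

definition admissible :: "('a::euclidean_space \<Rightarrow> real) \<Rightarrow> 'a set \<Rightarrow> real \<Rightarrow> bool" where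
  "admissible F X \<tau> \<longleftrightarrow> (\<forall>p\<in>X. \<forall>x\<in>X.
     norm (grad (fsite F p) x) * norm (x - p) \<le> \<tau> * fsite F p x \<and>
     onorm (hess (fsite F p) x) * (norm (x - p))\<^sup>2 \<le> \<tau>\<^sup>2 * fsite F p x)"

definition dir_admissible :: "('a::euclidean_space \<Rightarrow> real) \<Rightarrow> 'a set \<Rightarrow> real \<Rightarrow> bool" where
  "dir_admissible F X \<tau> \<longleftrightarrow> (\<forall>p\<in>X. \<forall>x\<in>X.
     inner (grad (fsite F p) x) (x - p) \<le> \<tau> * fsite F p x)"

definition asymmetric :: "('a::euclidean_space \<Rightarrow> real) \<Rightarrow> 'a set \<Rightarrow> real \<Rightarrow> bool" where
  "asymmetric F X \<mu> \<longleftrightarrow> (\<forall>p\<in>X. \<forall>q\<in>X. bregman F q p \<le> \<mu> * bregman F p q)"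

definition similar :: "('a::euclidean_space \<Rightarrow> real) \<Rightarrow> 'a set \<Rightarrow> real \<Rightarrow> bool" where
  "similar F X \<mu> \<longleftrightarrow> (\<forall>p\<in>X. \<forall>q\<in>X.
     (norm (q - p))\<^sup>2 \<le> bregman F q p \<and> bregman F q p \<le> \<mu> * (norm (q - p))\<^sup>2)"

end

theory Submission
  imports Defs
begin

text \<open>Parts (ii) and (iii) are algebra: by Cauchy--Schwarz, and by the identity
  \<open>\<langle>\<nabla>f\<^sub>p(x), x - p\<rangle> = D\<^sub>F(x,p) + D\<^sub>F(p,x)\<close>.
  For (i), the three-point identity at \<open>z = y - (\<nabla>F(y) - \<nabla>F(x))/(2\<mu>)\<close> together with both
  similarity bounds shows that \<open>\<nabla>F\<close> is \<open>2\<mu>\<close>-Lipschitz near every point. Hence the Hessian,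
  which is also the Hessian of every \<open>f\<^sub>p\<close>, has operator norm at most \<open>2\<mu> \<le> (2\<mu>)\<^sup>2\<close>, and the
  mean value theorem on the convex domain makes \<open>\<nabla>F\<close> globally \<open>2\<mu>\<close>-Lipschitz; the lower
  similarity bound \<open>\<parallel>x - p\<parallel>\<^sup>2 \<le> f\<^sub>p(x)\<close> turns both estimates into admissibility.\<close>

lemma grad_eq_of_has_derivative:
  fixes f :: "'a::euclidean_space \<Rightarrow> real"
  assumes "(f has_derivative (\<lambda>h. inner v h)) (at x)"
  shows "grad f x = v"
proof -
  have "frechet_derivative f (at x) = (\<lambda>h. inner v h)"
    using frechet_derivative_at[OF assms] by simp
  then show ?thesis
    unfolding grad_def using euclidean_representation[of v] by (simp add: inner_commute)
qed

lemma has_derivative_grad: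
  fixes f :: "'a::euclidean_space \<Rightarrow> real"
  assumes "f differentiable (at x)"
  shows "(f has_derivative (\<lambda>h. inner (grad f x) h)) (at x)"
proof -
  let ?f' = "frechet_derivative f (at x)"
  have der: "(f has_derivative ?f') (at x)"
    using assms frechet_derivative_works by blast
  then have lin: "linear ?f'"
    using has_derivative_linear by blast
  have "?f' h = inner (grad f x) h" for h
  proof -
    have "?f' h = ?f' (\<Sum>b\<in>Basis. (h \<bullet> b) *\<^sub>R b)"
      using euclidean_representation[of h] by simp
    also have "\<dots> = (\<Sum>b\<in>Basis. (h \<bullet> b) * ?f' b)"
      using lin by (simp add: linear_sum linear_scale)
    also have "\<dots> = inner (grad f x) h"
      unfolding grad_def by (simp add: inner_sum_right inner_commute mult.commute)
    finally show ?thesis .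
  qed
  then have "?f' = (\<lambda>h. inner (grad f x) h)"
    by blast
  then show ?thesis
    using der by simp
qed

lemma twice_differentiable_onD:
  assumes "twice_differentiable_on F X" and "x \<in> X"
  shows "F differentiable (at x)" and "(grad F has_derivative hess F x) (at x)"
  using assms frechet_derivative_works unfolding twice_differentiable_on_def hess_def by blast+

lemma bregman_three_point:
  "bregman F z x = bregman F z y + bregman F y x + inner (grad F y - grad F x) (z - y)"
  unfolding bregman_def by (simp add: inner_diff_left inner_diff_right algebra_simps)

lemma grad_fsite:
  fixes F :: "'a::euclidean_space \<Rightarrow> real"
  assumes "F differentiable (at x)"
  shows "grad (fsite F p) x = grad F x - grad F p"
proof (rule grad_eq_of_has_derivative)
  have "((\<lambda>y. F y - F p - inner (grad F p) (y - p)) has_derivative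
        (\<lambda>h. inner (grad F x) h - 0 - inner (grad F p) (h - 0))) (at x)"
    by (intro derivative_intros has_derivative_grad assms)
  then show "(fsite F p has_derivative (\<lambda>h. inner (grad F x - grad F p) h)) (at x)"
    unfolding fsite_def bregman_def by (simp add: inner_diff_left)
qed

lemma inner_grad_fsite:
  fixes F :: "'a::euclidean_space \<Rightarrow> real"
  assumes "F differentiable (at x)"
  shows "inner (grad (fsite F p) x) (x - p) = bregman F x p + bregman F p x"
  unfolding grad_fsite[OF assms] bregman_def
  by (simp add: inner_diff_left inner_diff_right algebra_simps)

lemma hess_fsite:
  fixes F :: "'a::euclidean_space \<Rightarrow> real"
  assumes "twice_differentiable_on F X" and "open X" and "x \<in> X"
  shows "hess (fsite F p) x = hess F x"
proof -
  have grad_eq: "grad (fsite F p) y = grad F y - grad F p" if "y \<in> X" for y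
    using twice_differentiable_onD(1)[OF assms(1) that] by (rule grad_fsite)
  have "((\<lambda>y. grad F y - grad F p) has_derivative (\<lambda>h. hess F x h - 0)) (at x)"
    using twice_differentiable_onD(2)[OF assms(1,3)] by (intro derivative_intros)
  then have "((\<lambda>y. grad F y - grad F p) has_derivative hess F x) (at x)"
    by simp
  then have "(grad (fsite F p) has_derivative hess F x) (at x)"
    by (rule has_derivative_transform_within_open[OF _ assms(2,3)]) (simp add: grad_eq)
  then show ?thesis
    unfolding hess_def using frechet_derivative_at by metis
qed

lemma onorm_le_of_locally_lipschitz:
  fixes f :: "'a::{real_normed_vector, perfect_space} \<Rightarrow> 'b::real_normed_vector"
  assumes der: "(f has_derivative f') (at x)"
    and lip: "eventually (\<lambda>y. norm (f y - f x) \<le> L * norm (y - x)) (nhds x)"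
  shows "onorm f' \<le> L"
proof (rule onorm_le)
  fix v
  define g where "g t = f (x + t *\<^sub>R v)" for t :: real
  have lin: "linear f'"
    using der has_derivative_linear by blast
  have g_der: "(g has_derivative (\<lambda>t. f' (t *\<^sub>R v))) (at_right 0)"
    unfolding g_def
    by (rule has_derivative_compose[of "\<lambda>t. x + t *\<^sub>R v", unfolded o_def])
       (auto intro!: derivative_eq_intros der)
  define r where "r t = norm (g t - g 0 - t *\<^sub>R f' v) / norm t" for t
  have rem: "(r \<longlongrightarrow> 0) (at_right 0)"
    using g_der unfolding r_def
    by (simp add: has_derivative_iff_norm linear_scale[OF lin])
  have "filterlim (\<lambda>t. x + t *\<^sub>R v) (nhds x) (at_right 0)"
    by (auto intro!: tendsto_eq_intros)
  from eventually_compose_filterlim[OF lip this]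
  have "eventually (\<lambda>t. norm (g t - g 0) \<le> L * (t * norm v) \<and> 0 < t) (at_right 0)"
    using eventually_at_right_less[of "0::real"]
    by eventually_elim (simp add: g_def)
  then have "eventually (\<lambda>t. norm (f' v) \<le> L * norm v + r t) (at_right 0)"
  proof (rule eventually_mono, clarify)
    fix t :: real assume lip_t: "norm (g t - g 0) \<le> L * (t * norm v)" and "0 < t"
    have "t * norm (f' v) \<le> norm (g t - g 0) + norm (g t - g 0 - t *\<^sub>R f' v)"
      using norm_triangle_ineq4[of "g t - g 0" "g t - g 0 - t *\<^sub>R f' v"] \<open>0 < t\<close> by simp
    then show "norm (f' v) \<le> L * norm v + r t"
      using lip_t \<open>0 < t\<close> by (simp add: r_def field_simps)
  qed
  moreover have "((\<lambda>t. L * norm v + r t) \<longlongrightarrow> L * norm v) (at_right 0)"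
    using tendsto_add[OF tendsto_const rem] by simp
  ultimately show "norm (f' v) \<le> L * norm v"
    by (intro tendsto_le[OF trivial_limit_at_right_real _ tendsto_const])
qed

lemma similar_grad_diff_le:
  fixes F :: "'a::euclidean_space \<Rightarrow> real"
  assumes sim: "similar F X \<mu>" and "\<mu> > 0" and x: "x \<in> X" and y: "y \<in> X"
    and step: "y - (1 / (2 * \<mu>)) *\<^sub>R (grad F y - grad F x) \<in> X"
  shows "norm (grad F y - grad F x) \<le> 2 * \<mu> * norm (y - x)"
proof -
  define \<Delta> where "\<Delta> = grad F y - grad F x"
  define z where "z = y - (1 / (2 * \<mu>)) *\<^sub>R \<Delta>"
  have "z \<in> X"
    using step unfolding z_def \<Delta>_def .
  have zy: "z - y = - ((1 / (2 * \<mu>)) *\<^sub>R \<Delta>)"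
    unfolding z_def by simp
  have "0 \<le> (norm (z - x))\<^sup>2"
    by simp
  also have "\<dots> \<le> bregman F z x"
    using sim \<open>z \<in> X\<close> x unfolding similar_def by blast
  also have "\<dots> = bregman F z y + bregman F y x + inner \<Delta> (z - y)"
    unfolding \<Delta>_def by (rule bregman_three_point)
  also have "\<dots> \<le> \<mu> * (norm (z - y))\<^sup>2 + \<mu> * (norm (y - x))\<^sup>2 + inner \<Delta> (z - y)"
  proof -
    have "bregman F z y \<le> \<mu> * (norm (z - y))\<^sup>2" "bregman F y x \<le> \<mu> * (norm (y - x))\<^sup>2"
      using sim \<open>z \<in> X\<close> x y unfolding similar_def by blast+
    then show ?thesis
      by linarith
  qed
  also have "\<dots> = \<mu> * (norm (y - x))\<^sup>2 - (norm \<Delta>)\<^sup>2 / (4 * \<mu>)"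
  proof -
    have "(norm (z - y))\<^sup>2 = (norm \<Delta>)\<^sup>2 / (4 * \<mu>\<^sup>2)"
      using \<open>\<mu> > 0\<close> by (simp add: zy power2_eq_square field_simps)
    moreover have "inner \<Delta> (z - y) = - (norm \<Delta>)\<^sup>2 / (2 * \<mu>)"
      using \<open>\<mu> > 0\<close> by (simp add: zy power2_norm_eq_inner)
    ultimately show ?thesis
      using \<open>\<mu> > 0\<close> by (simp add: power2_eq_square field_simps)
  qed
  finally have "(norm \<Delta>)\<^sup>2 \<le> (2 * \<mu> * norm (y - x))\<^sup>2"
    using \<open>\<mu> > 0\<close> by (simp add: field_simps power2_eq_square)
  moreover have "0 \<le> 2 * \<mu> * norm (y - x)"
    using \<open>\<mu> > 0\<close> by simp
  ultimately show ?thesis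
    unfolding \<Delta>_def by (rule power2_le_imp_le)
qed

lemma similar_grad_locally_lipschitz:
  fixes F :: "'a::euclidean_space \<Rightarrow> real"
  assumes sim: "similar F X \<mu>" and "\<mu> > 0" and "open X" and x: "x \<in> X"
    and "isCont (grad F) x"
  shows "eventually (\<lambda>y. norm (grad F y - grad F x) \<le> 2 * \<mu> * norm (y - x)) (nhds x)"
proof -
  define z where "z y = y - (1 / (2 * \<mu>)) *\<^sub>R (grad F y - grad F x)" for y
  have "isCont z x"
    unfolding z_def using assms(5) by (intro continuous_intros)
  then have "(z \<longlongrightarrow> z x) (nhds x)"
    unfolding isCont_def tendsto_at_iff_tendsto_nhds .
  then have "(z \<longlongrightarrow> x) (nhds x)"
    by (simp add: z_def)
  then have "eventually (\<lambda>y. z y \<in> X) (nhds x)"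
    using \<open>open X\<close> x by (rule topological_tendstoD)
  moreover have "eventually (\<lambda>y. y \<in> X) (nhds x)"
    using \<open>open X\<close> x by (rule eventually_nhds_in_open)
  ultimately show ?thesis
    by eventually_elim (use similar_grad_diff_le[OF sim \<open>\<mu> > 0\<close> x] in \<open>simp add: z_def\<close>)
qed

lemma similar_onorm_hess_le:
  fixes F :: "'a::euclidean_space \<Rightarrow> real"
  assumes "similar F X \<mu>" and "\<mu> > 0" and "open X" and "x \<in> X"
    and der: "(grad F has_derivative H) (at x)"
  shows "onorm H \<le> 2 * \<mu>"
  using der similar_grad_locally_lipschitz[OF assms(1-4) has_derivative_continuous[OF der]]
  by (rule onorm_le_of_locally_lipschitz)

lemma similar_grad_lipschitz:
  fixes F :: "'a::euclidean_space \<Rightarrow> real"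
  assumes "similar F X \<mu>" and "\<mu> > 0" and "open X" and "convex X"
    and "twice_differentiable_on F X" and "x \<in> X" and "p \<in> X"
  shows "norm (grad F x - grad F p) \<le> 2 * \<mu> * norm (x - p)"
proof (rule differentiable_bound[OF \<open>convex X\<close> _ _ \<open>x \<in> X\<close> \<open>p \<in> X\<close>])
  fix y assume "y \<in> X"
  note der = twice_differentiable_onD(2)[OF assms(5) this]
  show "(grad F has_derivative hess F y) (at y within X)"
    using der by (rule has_derivative_at_withinI)
  show "onorm (hess F y) \<le> 2 * \<mu>"
    using similar_onorm_hess_le[OF assms(1-3) \<open>y \<in> X\<close> der] .
qed

lemma similar_imp_admissible:
  fixes F :: "'a::euclidean_space \<Rightarrow> real"
  assumes sim: "similar F X \<mu>" and "1 \<le> 2 * \<mu>" and "open X" and "convex X"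
    and twice: "twice_differentiable_on F X"
  shows "admissible F X (2 * \<mu>)"
  unfolding admissible_def
proof (intro ballI conjI)
  fix p x assume p: "p \<in> X" and x: "x \<in> X"
  have "\<mu> > 0"
    using \<open>1 \<le> 2 * \<mu>\<close> by simp
  have lower: "(norm (x - p))\<^sup>2 \<le> fsite F p x"
    using sim x p unfolding similar_def fsite_def by blast
  have "norm (grad (fsite F p) x) \<le> 2 * \<mu> * norm (x - p)"
    using similar_grad_lipschitz[OF sim \<open>\<mu> > 0\<close> assms(3-5) x p]
    by (simp add: grad_fsite[OF twice_differentiable_onD(1)[OF twice x]])
  then have "norm (grad (fsite F p) x) * norm (x - p) \<le> 2 * \<mu> * norm (x - p) * norm (x - p)"
    by (rule mult_right_mono) simp
  also have "\<dots> = 2 * \<mu> * (norm (x - p))\<^sup>2"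
    by (simp add: power2_eq_square)
  also have "\<dots> \<le> 2 * \<mu> * fsite F p x"
    using lower \<open>\<mu> > 0\<close> by simp
  finally show "norm (grad (fsite F p) x) * norm (x - p) \<le> 2 * \<mu> * fsite F p x" .
  have "onorm (hess (fsite F p) x) \<le> 2 * \<mu>"
    unfolding hess_fsite[OF twice \<open>open X\<close> x]
    using similar_onorm_hess_le[OF sim \<open>\<mu> > 0\<close> \<open>open X\<close> x twice_differentiable_onD(2)[OF twice x]] .
  also have "\<dots> \<le> (2 * \<mu>)\<^sup>2"
    using \<open>1 \<le> 2 * \<mu>\<close> by (simp add: power2_eq_square)
  finally have "onorm (hess (fsite F p) x) * (norm (x - p))\<^sup>2 \<le> (2 * \<mu>)\<^sup>2 * (norm (x - p))\<^sup>2"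
    by (simp add: mult_right_mono)
  also have "\<dots> \<le> (2 * \<mu>)\<^sup>2 * fsite F p x"
    using lower by (simp add: mult_left_mono)
  finally show "onorm (hess (fsite F p) x) * (norm (x - p))\<^sup>2 \<le> (2 * \<mu>)\<^sup>2 * fsite F p x" .
qed

lemma admissible_imp_dir_admissible:
  assumes "admissible F X \<tau>"
  shows "dir_admissible F X \<tau>"
  using assms norm_cauchy_schwarz order_trans
  unfolding admissible_def dir_admissible_def by blast

lemma asymmetric_iff_dir_admissible:
  fixes F :: "'a::euclidean_space \<Rightarrow> real"
  assumes "\<And>x. x \<in> X \<Longrightarrow> F differentiable (at x)"
  shows "asymmetric F X \<mu> \<longleftrightarrow> dir_admissible F X (1 + \<mu>)"
proof -
  have "inner (grad (fsite F p) x) (x - p) \<le> (1 + \<mu>) * fsite F p x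
          \<longleftrightarrow> bregman F p x \<le> \<mu> * bregman F x p" if "x \<in> X" for x p
    using inner_grad_fsite[OF assms[OF that], of p] by (simp add: fsite_def algebra_simps)
  then show ?thesis
    unfolding asymmetric_def dir_admissible_def by blast
qed

theorem lemma8:
  fixes F :: "'a::euclidean_space \<Rightarrow> real" and X :: "'a set" and \<mu> :: real
  assumes "open X" and "convex X"
    and "strictly_convex_on X F"
    and "twice_differentiable_on F X"
    and "\<mu> \<ge> 1"
  shows "(similar F X \<mu> \<longrightarrow> admissible F X (2 * \<mu>))
       \<and> (admissible F X \<mu> \<longrightarrow> dir_admissible F X \<mu>)
       \<and> (asymmetric F X \<mu> \<longleftrightarrow> dir_admissible F X (1 + \<mu>))"
proof (intro conjI impI)
  show "admissible F X (2 * \<mu>)" if "similar F X \<mu>"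
    using similar_imp_admissible[OF that _ assms(1,2,4)] \<open>\<mu> \<ge> 1\<close> by simp
  show "dir_admissible F X \<mu>" if "admissible F X \<mu>"
    using that by (rule admissible_imp_dir_admissible)
  show "asymmetric F X \<mu> \<longleftrightarrow> dir_admissible F X (1 + \<mu>)"
    using twice_differentiable_onD(1)[OF assms(4)] by (rule asymmetric_iff_dir_admissible)
qed

end
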